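(* Let $\mathcal I$ be uniformly distributed on $V$, independent of the environment. The total variation distance between the law of the random vector $(n\pi_t(\mathcal I))_{0\le t\le h}$ and the law of $(M_t)_{0\le t\le h}$ is less than $\frac{\Delta^{2h+3}}{m}$.
   Context: Configuration model: $(d_i^-)_{1\le i\le n}$, $(d_i^+)_{1\le i\le n}$ positive integers with $\sum_id_i^-=\sum_id_i^+=m$; each vertex $i\in V=\{1,\dots,n\}$ carries a set $E_i^+$ of $d_i^+$ tails and $E_i^-$ of $d_i^-$ heads; $\omega$ is a uniformly random bijection from tails to heads, $\omega(e)=f$ an arc from the vertex of $e$ to that of $f$; $P(i,j)=\frac1{d_i^+}|\{e\in E_i^+:\omega(e)\in E_j^-\}|$. Assume $\min_i\min(d_i^+,d_i^-)\ge2$; $\Delta:=\max_i\max(d_i^+,d_i^-)$, $h=\lfloor\frac{\ln n}{10\ln\Delta}\rfloor$, $\pi_0(i)=d_i^-/m$, $\pi_t=\pi_0P^t$. Branching process $\mathcal T_\star$: the root $o$ (generation $0$) has mark uniform on $V$; each node $x$ of generation $t$, with mark $i(x)$, independently has exactly $d^-_{i(x)}$ children forming generation $t+1$, whose marks are i.i.d. with the out-degree distribution $\mathbf P(\text{mark}=i)=d_i^+/m$. For a node $x$ of generation $t$ with path $x=x_0,x_1,\dots,x_t=o$ to the root, $\mathbf w(x)=\frac{n d^-_{i(x_0)}}{m}\prod_{k=0}^{t-1}\frac1{d^+_{i(x_k)}}$ (empty product $=1$), and $M_t=\sum_{x\text{ in generation }t}\mathbf w(x)$. *)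

theory Defs
  imports "HOL-Probability.Probability"
begin

definition Tails :: "nat \<Rightarrow> (nat \<Rightarrow> nat) \<Rightarrow> (nat \<times> nat) set" where
  "Tails n dout = {(i,k). i < n \<and> k < dout i}"

definition Heads :: "nat \<Rightarrow> (nat \<Rightarrow> nat) \<Rightarrow> (nat \<times> nat) set" where
  "Heads n din = {(j,l). j < n \<and> l < din j}"

text \<open>Configurations: bijections from tails to heads (extensional, so the set is finite).\<close>
definition configs :: "nat \<Rightarrow> (nat \<Rightarrow> nat) \<Rightarrow> (nat \<Rightarrow> nat) \<Rightarrow> (nat \<times> nat \<Rightarrow> nat \<times> nat) set" where
  "configs n din dout =
     {\<omega> \<in> Tails n dout \<rightarrow>\<^sub>E Heads n din. bij_betw \<omega> (Tails n dout) (Heads n din)}"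

definition config_pmf :: "nat \<Rightarrow> (nat \<Rightarrow> nat) \<Rightarrow> (nat \<Rightarrow> nat) \<Rightarrow> (nat \<times> nat \<Rightarrow> nat \<times> nat) pmf" where
  "config_pmf n din dout = pmf_of_set (configs n din dout)"

definition Pmat :: "(nat \<Rightarrow> nat) \<Rightarrow> (nat \<times> nat \<Rightarrow> nat \<times> nat) \<Rightarrow> nat \<Rightarrow> nat \<Rightarrow> real" where
  "Pmat dout \<omega> i j = real (card {k. k < dout i \<and> fst (\<omega> (i,k)) = j}) / real (dout i)"

fun pi_t :: "nat \<Rightarrow> (nat \<Rightarrow> nat) \<Rightarrow> (nat \<Rightarrow> nat) \<Rightarrow> (nat \<times> nat \<Rightarrow> nat \<times> nat) \<Rightarrow> nat \<Rightarrow> nat \<Rightarrow> real" where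
  "pi_t n din dout \<omega> 0 j = real (din j) / real (\<Sum>i<n. din i)"
| "pi_t n din dout \<omega> (Suc t) j = (\<Sum>i<n. pi_t n din dout \<omega> t i * Pmat dout \<omega> i j)"

definition env_law :: "nat \<Rightarrow> (nat \<Rightarrow> nat) \<Rightarrow> (nat \<Rightarrow> nat) \<Rightarrow> nat \<Rightarrow> real list pmf" where
  "env_law n din dout h =
     bind_pmf (config_pmf n din dout) (\<lambda>\<omega>.
       map_pmf (\<lambda>I. map (\<lambda>t. real n * pi_t n din dout \<omega> t I) [0..<Suc h]) (pmf_of_set {..<n}))"

text \<open>Mark distribution P(mark = i) = dout i / m, realised as the vertex of a uniform tail.\<close>
definition mark_pmf :: "nat \<Rightarrow> (nat \<Rightarrow> nat) \<Rightarrow> nat pmf" where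
  "mark_pmf n dout = map_pmf fst (pmf_of_set (Tails n dout))"

fun iid_list :: "nat \<Rightarrow> 'a pmf \<Rightarrow> 'a list pmf" where
  "iid_list 0 p = return_pmf []"
| "iid_list (Suc k) p = bind_pmf p (\<lambda>x. map_pmf (Cons x) (iid_list k p))"

text \<open>A generation is a list of nodes (mark, a) where a is the product of 1/dout over the
node and its ancestors, the root excluded. Each node of mark i independently gets din i
children with i.i.d. marks.\<close>
fun next_gen :: "nat \<Rightarrow> (nat \<Rightarrow> nat) \<Rightarrow> (nat \<Rightarrow> nat) \<Rightarrow> (nat \<times> real) list \<Rightarrow> (nat \<times> real) list pmf" where
  "next_gen n din dout [] = return_pmf []"
| "next_gen n din dout ((i,a) # xs) =
     bind_pmf (iid_list (din i) (mark_pmf n dout)) (\<lambda>cs.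
       map_pmf (\<lambda>rest. map (\<lambda>j. (j, a / real (dout j))) cs @ rest) (next_gen n din dout xs))"

fun gens :: "nat \<Rightarrow> (nat \<Rightarrow> nat) \<Rightarrow> (nat \<Rightarrow> nat) \<Rightarrow> nat \<Rightarrow> (nat \<times> real) list list pmf" where
  "gens n din dout 0 = map_pmf (\<lambda>i. [[(i, 1)]]) (pmf_of_set {..<n})"
| "gens n din dout (Suc t) =
     bind_pmf (gens n din dout t) (\<lambda>gs. map_pmf (\<lambda>g. gs @ [g]) (next_gen n din dout (last gs)))"

definition M_law :: "nat \<Rightarrow> (nat \<Rightarrow> nat) \<Rightarrow> (nat \<Rightarrow> nat) \<Rightarrow> nat \<Rightarrow> real list pmf" where
  "M_law n din dout h =
     map_pmf (\<lambda>gs. map (\<lambda>g. sum_list (map (\<lambda>(i,a). real n * real (din i) / real (\<Sum>k<n. din k) * a) g)) gs)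
       (gens n din dout h)"

definition tv_dist :: "'a pmf \<Rightarrow> 'a pmf \<Rightarrow> real" where
  "tv_dist p q = (SUP A. \<bar>measure_pmf.prob p A - measure_pmf.prob q A\<bar>)"

end

theory Submission
  imports Defs
begin

text \<open>
  Explore the configuration model backwards from the uniform vertex \<open>I\<close>: \<open>n \<pi>\<^sub>t(I)\<close> is a
  weighted sum over the paths of length \<open>t\<close> ending in \<open>I\<close>, i.e. a functional of generation \<open>t\<close>
  of the backward exploration tree of the environment. The same functional of the branching
  process gives \<open>M\<^sub>t\<close> once every position of its tree is labelled by an independent uniform tail,
  whose vertex is the mark.

  Coupling: draw the configuration \<open>\<omega>\<close> and independent tails; label the positions reached by the
  exploration of \<open>\<omega>\<close> with the tail matched to the corresponding head, and keep the independent
  tails elsewhere. This writes the law of \<open>(n \<pi>\<^sub>t(I))\<^sub>t\<close> as a push-forward of labellings. A labelling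
  without collisions (distinct vertices on all positions up to depth \<open>h\<close>, none equal to the root)
  is produced by at least \<open>m!\<close> pairs of a consistent configuration and free labels, so the coupled
  law gives it at least its independent mass. The distance is therefore at most the probability
  of a collision, which a union bound over pairs of the fewer than \<open>\<Delta>\<^sup>h\<^sup>+\<^sup>1\<close> positions bounds by
  \<open>\<Delta>\<^sup>2\<^sup>h\<^sup>+\<^sup>3 / m\<close>.
\<close>

section \<open>Counting\<close>

definition bijections :: "'a set \<Rightarrow> 'b set \<Rightarrow> ('a \<Rightarrow> 'b) set" where
  "bijections A B = {f \<in> A \<rightarrow>\<^sub>E B. bij_betw f A B}"

lemma bijectionsI: "bij_betw f A B \<Longrightarrow> restrict f A \<in> bijections A B"
  by (auto simp: bijections_def bij_betw_imp_funcset bij_betw_cong[of A "restrict f A" f])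

lemma finite_bijections: "finite A \<Longrightarrow> finite B \<Longrightarrow> finite (bijections A B)"
  unfolding bijections_def by (rule finite_subset[of _ "A \<rightarrow>\<^sub>E B"]) (auto intro: finite_PiE)

lemma bij_betw_bijections_insert:
  assumes "a \<notin> A"
  shows "bij_betw (\<lambda>f. (f a, restrict f A)) (bijections (insert a A) B)
           (SIGMA b:B. bijections A (B - {b}))"
proof (rule bij_betw_byWitness[where f' = "\<lambda>(b,g). g(a := b)"])
  show "\<forall>f\<in>bijections (insert a A) B. (\<lambda>(b, g). g(a := b)) (f a, restrict f A) = f"
    using assms by (auto simp: bijections_def fun_eq_iff PiE_def extensional_def)
  show "\<forall>x\<in>SIGMA b:B. bijections A (B - {b}). (\<lambda>f. (f a, restrict f A)) ((\<lambda>(b, g). g(a := b)) x) = x"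
    using assms by (auto simp: bijections_def fun_eq_iff PiE_def extensional_def)
  show "(\<lambda>f. (f a, restrict f A)) ` bijections (insert a A) B \<subseteq> (SIGMA b:B. bijections A (B - {b}))"
  proof clarify
    fix f assume f: "f \<in> bijections (insert a A) B"
    then have inj: "inj_on f (insert a A)" and im: "f ` insert a A = B" and fa: "f a \<in> B"
      by (auto simp: bijections_def bij_betw_def)
    then have "bij_betw f A (B - {f a})"
      using assms by (force simp: bij_betw_def)
    then show "f a \<in> B \<and> restrict f A \<in> bijections A (B - {f a})"
      using fa by (blast intro: bijectionsI)
  qed
  show "(\<lambda>(b, g). g(a := b)) ` (SIGMA b:B. bijections A (B - {b})) \<subseteq> bijections (insert a A) B"
  proof clarify
    fix b g assume b: "b \<in> B" and g: "g \<in> bijections A (B - {b})"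
    then have "bij_betw (g(a := b)) A (B - {b})"
      using assms bij_betw_cong[of A "g(a := b)" g "B - {b}"] by (fastforce simp: bijections_def)
    then have "bij_betw (g(a := b)) (insert a A) B"
      using assms b by (auto simp: bij_betw_def inj_on_insert insert_absorb)
    moreover have "g(a := b) \<in> insert a A \<rightarrow>\<^sub>E B"
      using g b assms by (auto simp: bijections_def PiE_def extensional_def)
    ultimately show "g(a := b) \<in> bijections (insert a A) B"
      by (simp add: bijections_def)
  qed
qed

lemma card_bijections:
  assumes "finite A" "finite B" "card A = card B"
  shows "card (bijections A B) = fact (card A)"
  using assms
proof (induction A arbitrary: B rule: finite_induct)
  case empty
  then show ?case by (simp add: bijections_def bij_betw_def)
next
  case (insert a A B)
  have "card (bijections (insert a A) B) = card (SIGMA b:B. bijections A (B - {b}))"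
    by (rule bij_betw_same_card[OF bij_betw_bijections_insert[OF insert.hyps(2)]])
  also have "\<dots> = (\<Sum>b\<in>B. card (bijections A (B - {b})))"
    using insert by (intro card_SigmaI) (auto intro: finite_bijections)
  also have "\<dots> = (\<Sum>b\<in>B. fact (card A))"
    using insert by (intro sum.cong refl insert.IH) auto
  also have "\<dots> = fact (card (insert a A))"
    using insert by (simp add: card_insert_disjoint) (metis fact_Suc of_nat_id)
  finally show ?case .
qed

lemma bij_betw_extend_injection:
  assumes "inj_on \<alpha> J" "inj_on \<beta> J" "\<alpha> ` J \<subseteq> A" "\<beta> ` J \<subseteq> B" "bij_betw g (A - \<alpha> ` J) (B - \<beta> ` J)"
  shows "bij_betw (\<lambda>x. if x \<in> \<alpha> ` J then \<beta> (the_inv_into J \<alpha> x) else g x) A B"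
    (is "bij_betw ?f _ _")
proof -
  have "bij_betw (\<beta> \<circ> the_inv_into J \<alpha>) (\<alpha> ` J) (\<beta> ` J)"
    using bij_betw_the_inv_into[OF inj_on_imp_bij_betw[OF assms(1)]]
      inj_on_imp_bij_betw[OF assms(2)] by (rule bij_betw_trans)
  then have "bij_betw ?f (\<alpha> ` J) (\<beta> ` J)"
    by (rule bij_betw_cong[THEN iffD1, rotated]) simp
  moreover have "bij_betw ?f (A - \<alpha> ` J) (B - \<beta> ` J)"
    using assms(5) by (auto intro: bij_betw_cong[THEN iffD1])
  ultimately have "bij_betw ?f (\<alpha> ` J \<union> (A - \<alpha> ` J)) (\<beta> ` J \<union> (B - \<beta> ` J))"
    by (rule bij_betw_combine) auto
  then show ?thesis
    using assms(3,4) by (simp add: Un_Diff_cancel Un_absorb1)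
qed

lemma bij_betw_restrict_bijections_fixing:
  assumes "inj_on \<alpha> J" "inj_on \<beta> J" "\<alpha> ` J \<subseteq> A" "\<beta> ` J \<subseteq> B"
  shows "bij_betw (\<lambda>f. restrict f (A - \<alpha> ` J)) {f \<in> bijections A B. \<forall>j\<in>J. f (\<alpha> j) = \<beta> j}
           (bijections (A - \<alpha> ` J) (B - \<beta> ` J))"
proof -
  define ext where "ext = (\<lambda>g x. if x \<in> \<alpha> ` J then \<beta> (the_inv_into J \<alpha> x) else g x)"
  have ext_fixing: "ext g (\<alpha> j) = \<beta> j" if "j \<in> J" for g j
    using that assms(1) by (simp add: ext_def the_inv_into_f_f)
  show ?thesis
  proof (rule bij_betw_byWitness[where f' = "\<lambda>g. restrict (ext g) A"])
    show "\<forall>f\<in>{f \<in> bijections A B. \<forall>j\<in>J. f (\<alpha> j) = \<beta> j}. restrict (ext (restrict f (A - \<alpha> ` J))) A = f"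
      by (auto simp: fun_eq_iff ext_def the_inv_into_f_f[OF assms(1)] bijections_def PiE_def extensional_def)
    show "\<forall>g\<in>bijections (A - \<alpha> ` J) (B - \<beta> ` J). restrict (restrict (ext g) A) (A - \<alpha> ` J) = g"
      by (auto simp: fun_eq_iff ext_def bijections_def PiE_def extensional_def)
    show "(\<lambda>f. restrict f (A - \<alpha> ` J)) ` {f \<in> bijections A B. \<forall>j\<in>J. f (\<alpha> j) = \<beta> j}
            \<subseteq> bijections (A - \<alpha> ` J) (B - \<beta> ` J)"
    proof clarify
      fix f assume f: "f \<in> bijections A B" and fixing: "\<forall>j\<in>J. f (\<alpha> j) = \<beta> j"
      have bij: "bij_betw f A B" using f by (simp add: bijections_def)
      have "f ` (\<alpha> ` J) = \<beta> ` J" using fixing by force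
      then have "bij_betw f (A - \<alpha> ` J) (B - \<beta> ` J)"
        using bij_betw_DiffI[OF bij, of "\<alpha> ` J" "\<beta> ` J"] bij_betw_subset[OF bij assms(3)] assms(3,4)
        by auto
      then show "restrict f (A - \<alpha> ` J) \<in> bijections (A - \<alpha> ` J) (B - \<beta> ` J)"
        by (rule bijectionsI)
    qed
    show "(\<lambda>g. restrict (ext g) A) ` bijections (A - \<alpha> ` J) (B - \<beta> ` J)
            \<subseteq> {f \<in> bijections A B. \<forall>j\<in>J. f (\<alpha> j) = \<beta> j}"
    proof clarify
      fix g assume g: "g \<in> bijections (A - \<alpha> ` J) (B - \<beta> ` J)"
      then have "bij_betw (ext g) A B"
        unfolding ext_def using assms by (intro bij_betw_extend_injection) (auto simp: bijections_def)
      then show "restrict (ext g) A \<in> bijections A B \<and> (\<forall>j\<in>J. restrict (ext g) A (\<alpha> j) = \<beta> j)"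
        using ext_fixing assms(3) by (auto intro: bijectionsI)
    qed
  qed
qed

lemma card_bijections_fixing:
  assumes "finite A" "finite B" "card A = card B" "finite J"
    and "inj_on \<alpha> J" "inj_on \<beta> J" "\<alpha> ` J \<subseteq> A" "\<beta> ` J \<subseteq> B"
  shows "card {f \<in> bijections A B. \<forall>j\<in>J. f (\<alpha> j) = \<beta> j} = fact (card A - card J)"
proof -
  have "card (A - \<alpha> ` J) = card A - card J" "card (B - \<beta> ` J) = card B - card J"
    using assms by (simp_all add: card_Diff_subset card_image finite_subset)
  then show ?thesis
    using bij_betw_same_card[OF bij_betw_restrict_bijections_fixing[OF assms(5-8)]] assms(1-3)
    by (simp add: card_bijections)
qed

lemma fact_le_fact_diff_mult_power: "k \<le> m \<Longrightarrow> fact m \<le> fact (m - k) * m ^ k"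
  using fact_div_fact_le_pow[of k m] fact_dvd[of "m - k" m]
  by (metis diff_le_self dvd_mult_div_cancel mult_le_mono2)

lemma card_PiE_dflt_free_on:
  assumes "finite P" "A \<subseteq> P" "finite B"
  shows "card (PiE_dflt P d (\<lambda>q. if q \<in> A then B else {\<tau> q})) = card B ^ card A"
proof -
  have "card (PiE_dflt P d (\<lambda>q. if q \<in> A then B else {\<tau> q})) = (\<Prod>q\<in>P. if q \<in> A then card B else 1)"
    using assms by (subst card_PiE_dflt) (auto intro: prod.cong)
  also have "\<dots> = card B ^ card A"
    using assms by (simp add: prod.If_cases Int_absorb1)
  finally show ?thesis .
qed

lemma card_off_diagonal:
  assumes "finite P"
  shows "card {(q1, q2) \<in> P \<times> P. q1 \<noteq> q2} + card P = card P ^ 2"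
proof -
  have "{(q1, q2) \<in> P \<times> P. q1 \<noteq> q2} = P \<times> P - (\<lambda>q. (q, q)) ` P"
    by auto
  also have "card \<dots> = card P * card P - card P"
    using assms by (subst card_Diff_subset) (auto simp: card_cartesian_product card_image inj_on_def)
  finally show ?thesis
    by (simp add: power2_eq_square le_square)
qed

section \<open>Total variation and products of probability mass functions\<close>

lemma measure_pmf_ge_if_pmf_ge:
  assumes "finite (set_pmf \<nu>)" and "\<forall>b\<in>G. pmf \<nu> b \<le> pmf \<mu> b"
  shows "measure_pmf.prob \<mu> X \<ge> measure_pmf.prob \<nu> X - measure_pmf.prob \<nu> (-G)"
proof -
  let ?Y = "X \<inter> G \<inter> set_pmf \<nu>"
  have "measure_pmf.prob \<nu> X \<le> measure_pmf.prob \<nu> (X \<inter> G) + measure_pmf.prob \<nu> (-G)"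
    using measure_subadditive[of "X \<inter> G" "measure_pmf \<nu>" "-G"]
      measure_pmf.finite_measure_mono[of X "(X \<inter> G) \<union> (-G)" \<nu>] by fastforce
  also have "measure_pmf.prob \<nu> (X \<inter> G) = measure_pmf.prob \<nu> ?Y"
    using measure_Int_set_pmf[of \<nu> "X \<inter> G"] by (simp add: Int_assoc)
  also have "\<dots> = sum (pmf \<nu>) ?Y"
    using assms(1) by (intro measure_measure_pmf_finite) auto
  also have "\<dots> \<le> sum (pmf \<mu>) ?Y"
    using assms(2) by (intro sum_mono) auto
  also have "\<dots> = measure_pmf.prob \<mu> ?Y"
    using assms(1) by (intro measure_measure_pmf_finite[symmetric]) auto
  also have "\<dots> \<le> measure_pmf.prob \<mu> X"
    by (intro measure_pmf.finite_measure_mono) auto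
  finally show ?thesis by simp
qed

lemma tv_dist_map_pmf_le:
  assumes "finite (set_pmf \<nu>)" and "\<forall>b\<in>G. pmf \<nu> b \<le> pmf \<mu> b"
  shows "tv_dist (map_pmf g \<mu>) (map_pmf g \<nu>) \<le> measure_pmf.prob \<nu> (-G)"
  unfolding tv_dist_def
proof (rule cSUP_least)
  fix A
  have "measure_pmf.prob \<mu> (g -` A) \<ge> measure_pmf.prob \<nu> (g -` A) - measure_pmf.prob \<nu> (-G)"
    and "measure_pmf.prob \<mu> (- (g -` A)) \<ge> measure_pmf.prob \<nu> (- (g -` A)) - measure_pmf.prob \<nu> (-G)"
    by (rule measure_pmf_ge_if_pmf_ge[OF assms])+
  moreover have "measure_pmf.prob p (- (g -` A)) = 1 - measure_pmf.prob p (g -` A)" for p :: "_ pmf"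
    using measure_pmf.prob_compl[of "g -` A" p] by (simp add: Compl_eq_Diff_UNIV)
  ultimately show "\<bar>measure_pmf.prob (map_pmf g \<mu>) A - measure_pmf.prob (map_pmf g \<nu>) A\<bar>
                     \<le> measure_pmf.prob \<nu> (-G)"
    by (simp add: abs_le_iff)
qed simp

lemma Pi_pmf_two_components:
  assumes "finite A" "q1 \<in> A" "q2 \<in> A" "q1 \<noteq> q2"
  shows "map_pmf (\<lambda>f. (f q1, f q2)) (Pi_pmf A d p) = pair_pmf (p q1) (p q2)"
proof -
  have A: "A = insert q1 (A - {q1})" using assms by auto
  have "map_pmf (\<lambda>f. (f q1, f q2)) (Pi_pmf A d p)
     = map_pmf (\<lambda>(y,f). (y, f q2)) (pair_pmf (p q1) (Pi_pmf (A - {q1}) d p))"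
    using assms by (subst A, subst Pi_pmf_insert) (auto simp: pmf.map_comp o_def case_prod_unfold)
  also have "\<dots> = pair_pmf (p q1) (map_pmf (\<lambda>f. f q2) (Pi_pmf (A - {q1}) d p))"
    using map_pair[of id "\<lambda>f. f q2" "p q1"] by (simp add: case_prod_unfold id_def)
  also have "map_pmf (\<lambda>f. f q2) (Pi_pmf (A - {q1}) d p) = p q2"
    using assms by (subst Pi_pmf_component) auto
  finally show ?thesis .
qed

lemma pair_pmf_of_set:
  assumes "finite A" "A \<noteq> {}" "finite B" "B \<noteq> {}"
  shows "pair_pmf (pmf_of_set A) (pmf_of_set B) = pmf_of_set (A \<times> B)"
proof (rule pmf_eqI, clarify)
  fix a b
  show "pmf (pair_pmf (pmf_of_set A) (pmf_of_set B)) (a, b) = pmf (pmf_of_set (A \<times> B)) (a, b)"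
    using assms by (simp add: pmf_pair indicator_def card_cartesian_product)
qed

lemma measure_pair_pmf_of_set:
  assumes "finite A" "A \<noteq> {}" "finite B" "B \<noteq> {}"
  shows "measure_pmf.prob (pair_pmf (pmf_of_set A) (pmf_of_set B)) E
           = card ((A \<times> B) \<inter> E) / (card A * card B)"
  using assms by (simp add: pair_pmf_of_set measure_pmf_of_set card_cartesian_product)

lemma pmf_Pi_pmf_of_set:
  assumes "finite P" "finite A" "A \<noteq> {}" "\<And>q. q \<in> P \<Longrightarrow> \<tau> q \<in> A" "\<And>q. q \<notin> P \<Longrightarrow> \<tau> q = d"
  shows "pmf (Pi_pmf P d (\<lambda>_. pmf_of_set A)) \<tau> = (1 / real (card A)) ^ card P"
  using assms by (subst pmf_Pi') auto

section \<open>Labelled exploration trees\<close>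

text \<open>
  A node \<open>(p, v, a)\<close> of an exploration tree has position \<open>p\<close>, the list of child indices read from
  the node up to the root (so \<open>c # p\<close> is the \<open>c\<close>-th child of \<open>p\<close>), vertex \<open>v\<close>, and weight \<open>a\<close>, the
  product of \<open>1 / dout\<close> over the path with the root excluded. The tree is determined by a child
  function \<open>\<gamma>\<close>: \<open>\<gamma> p v c\<close> is the vertex of the \<open>c\<close>-th child of the node at \<open>p\<close>, whose vertex is \<open>v\<close>.
\<close>

type_synonym node = "nat list \<times> nat \<times> real"

definition children ::
    "(nat \<Rightarrow> nat) \<Rightarrow> (nat \<Rightarrow> nat) \<Rightarrow> (nat list \<Rightarrow> nat \<Rightarrow> nat \<Rightarrow> nat) \<Rightarrow> node list \<Rightarrow> node list" where
  "children din dout \<gamma> L =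
     concat (map (\<lambda>(p, v, a). map (\<lambda>c. (c # p, \<gamma> p v c, a / real (dout (\<gamma> p v c)))) [0..<din v]) L)"

fun generation ::
    "(nat \<Rightarrow> nat) \<Rightarrow> (nat \<Rightarrow> nat) \<Rightarrow> (nat list \<Rightarrow> nat \<Rightarrow> nat \<Rightarrow> nat) \<Rightarrow> nat \<Rightarrow> nat \<Rightarrow> node list" where
  "generation din dout \<gamma> I 0 = [([], I, 1)]"
| "generation din dout \<gamma> I (Suc t) = children din dout \<gamma> (generation din dout \<gamma> I t)"

fun path_vertex :: "(nat list \<Rightarrow> nat \<Rightarrow> nat \<Rightarrow> nat) \<Rightarrow> nat \<Rightarrow> nat list \<Rightarrow> nat" where
  "path_vertex \<gamma> I [] = I"
| "path_vertex \<gamma> I (c # p) = \<gamma> p (path_vertex \<gamma> I p) c"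

fun path_active :: "(nat \<Rightarrow> nat) \<Rightarrow> (nat list \<Rightarrow> nat \<Rightarrow> nat \<Rightarrow> nat) \<Rightarrow> nat \<Rightarrow> nat list \<Rightarrow> bool" where
  "path_active din \<gamma> I [] = True"
| "path_active din \<gamma> I (c # p) = (path_active din \<gamma> I p \<and> c < din (path_vertex \<gamma> I p))"

lemma children_Cons:
  "children din dout \<gamma> ((p, v, a) # L) =
     map (\<lambda>c. (c # p, \<gamma> p v c, a / real (dout (\<gamma> p v c)))) [0..<din v] @ children din dout \<gamma> L"
  by (simp add: children_def)

lemma mem_children:
  "(q, u, b) \<in> set (children din dout \<gamma> L) \<Longrightarrow>
     \<exists>p v a c. (p, v, a) \<in> set L \<and> c < din v \<and> q = c # p \<and> u = \<gamma> p v c \<and> b = a / real (dout u)"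
  unfolding children_def by (clarsimp split: prod.splits) blast

lemma children_cong:
  assumes "\<And>p v a c. (p, v, a) \<in> set L \<Longrightarrow> c < din v \<Longrightarrow> \<gamma>1 p v c = \<gamma>2 p v c"
  shows "children din dout \<gamma>1 L = children din dout \<gamma>2 L"
  unfolding children_def using assms by (auto intro!: arg_cong[where f = concat] map_cong)

lemma mem_generation:
  "(p, v, a) \<in> set (generation din dout \<gamma> I t) \<Longrightarrow>
     length p = t \<and> path_active din \<gamma> I p \<and> path_vertex \<gamma> I p = v"
  by (induction t arbitrary: p v a) (auto dest!: mem_children)

lemma generation_cong:
  assumes "\<And>p c. length p < t \<Longrightarrow> path_active din \<gamma>1 I p \<Longrightarrow> c < din (path_vertex \<gamma>1 I p) \<Longrightarrow>
             \<gamma>1 p (path_vertex \<gamma>1 I p) c = \<gamma>2 p (path_vertex \<gamma>1 I p) c"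
  shows "generation din dout \<gamma>1 I t = generation din dout \<gamma>2 I t"
  using assms
proof (induction t)
  case (Suc t)
  then have "children din dout \<gamma>1 (generation din dout \<gamma>1 I t) = children din dout \<gamma>2 (generation din dout \<gamma>1 I t)"
    by (intro children_cong) (metis less_Suc_eq mem_generation)
  then show ?case
    using Suc by simp
qed simp

lemma distinct_children:
  "distinct (map fst L) \<Longrightarrow> distinct (map fst (children din dout \<gamma> L))"
proof (induction L)
  case (Cons x L)
  obtain p v a where x: "x = (p, v, a)" by (cases x)
  have "p \<notin> fst ` set L" using Cons.prems x by simp
  then have "fst ` set (children din dout \<gamma> L) \<inter> (\<lambda>c. c # p) ` {0..<din v} = {}"
    by (force dest: mem_children)
  then show ?case
    using Cons by (auto simp: x children_Cons o_def distinct_map inj_on_def)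
qed (simp add: children_def)

lemma distinct_generation: "distinct (map fst (generation din dout \<gamma> I t))"
  by (induction t) (auto intro: distinct_children)

lemma path_active_bounded:
  assumes "I < n" and "\<And>v. v < n \<Longrightarrow> din v \<le> D"
    and "\<And>p v c. v < n \<Longrightarrow> c < din v \<Longrightarrow> length p < k \<Longrightarrow> set p \<subseteq> {..<D} \<Longrightarrow> \<gamma> p v c < n"
  shows "path_active din \<gamma> I q \<Longrightarrow> length q \<le> k \<Longrightarrow> path_vertex \<gamma> I q < n \<and> set q \<subseteq> {..<D}"
proof (induction q)
  case (Cons c p)
  then have "path_vertex \<gamma> I p < n" "set p \<subseteq> {..<D}" "c < din (path_vertex \<gamma> I p)"
    by auto
  then show ?case
    using Cons.prems assms(2,3) by (fastforce intro: order.strict_trans2)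
qed (simp add: assms(1))

definition positions :: "nat \<Rightarrow> nat \<Rightarrow> nat list set" where
  "positions D h = {p. p \<noteq> [] \<and> length p \<le> h \<and> set p \<subseteq> {..<D}}"

definition level :: "nat \<Rightarrow> nat \<Rightarrow> nat list set" where
  "level D k = {p. length p = k \<and> set p \<subseteq> {..<D}}"

lemma finite_level: "finite (level D k)"
  unfolding level_def
  by (rule finite_subset[OF _ finite_lists_length_le[of "{..<D}" k]]) auto

lemma finite_positions: "finite (positions D h)"
  unfolding positions_def
  by (rule finite_subset[OF _ finite_lists_length_le[of "{..<D}" h]]) auto

lemma positions_0: "positions D 0 = {}"
  by (auto simp: positions_def)

lemma positions_Suc: "positions D (Suc t) = positions D t \<union> level D (Suc t)"
  by (auto simp: positions_def level_def)

lemma positions_level_disjoint: "positions D t \<inter> level D (Suc t) = {}"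
  by (auto simp: positions_def level_def)

lemma Cons_in_positions_tl: "c # p \<in> positions D h \<Longrightarrow> p = [] \<or> p \<in> positions D h"
  by (cases p) (auto simp: positions_def)

lemma card_positions_less:
  assumes "D \<ge> 2"
  shows "card (positions D h) < D ^ Suc h"
proof -
  have geometric: "(\<Sum>i\<le>k. D ^ i) < D ^ Suc k" for k
  proof (induction k)
    case (Suc k)
    have "(\<Sum>i\<le>Suc k. D ^ i) < D ^ Suc k + D ^ Suc k"
      using Suc by simp
    also have "\<dots> \<le> D * D ^ Suc k"
      using assms by (simp add: mult_2[symmetric] mult_right_mono)
    finally show ?case by simp
  qed (use assms in simp)
  have "card (positions D h) \<le> card {xs. set xs \<subseteq> {..<D} \<and> length xs \<le> h}"
    by (intro card_mono finite_lists_length_le) (auto simp: positions_def)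
  also have "\<dots> = (\<Sum>i\<le>h. D ^ i)"
    by (simp add: card_lists_length_le)
  finally show ?thesis
    using geometric by (rule le_less_trans)
qed

text \<open>
  The branching process reads marks off tails attached to positions; the environment makes
  the \<open>c\<close>-th child of \<open>v\<close> the vertex of the tail \<open>\<sigma> (v, c)\<close> matched to the head \<open>(v, c)\<close>.
\<close>

definition tree_child :: "(nat list \<Rightarrow> nat \<times> nat) \<Rightarrow> nat list \<Rightarrow> nat \<Rightarrow> nat \<Rightarrow> nat" where
  "tree_child \<tau> p v c = fst (\<tau> (c # p))"

definition graph_child :: "(nat \<times> nat \<Rightarrow> nat \<times> nat) \<Rightarrow> nat list \<Rightarrow> nat \<Rightarrow> nat \<Rightarrow> nat" where
  "graph_child \<sigma> p v c = fst (\<sigma> (v, c))"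

lemma tree_child_apply: "tree_child \<tau> p v c = fst (\<tau> (c # p))"
  by (simp add: tree_child_def)

lemma graph_child_apply: "graph_child \<sigma> p v c = fst (\<sigma> (v, c))"
  by (simp add: graph_child_def)

section \<open>The environment seen from a vertex\<close>

definition weighted_sum :: "(nat \<Rightarrow> real) \<Rightarrow> node list \<Rightarrow> real" where
  "weighted_sum f L = (\<Sum>(p, v, a)\<leftarrow>L. a * f v)"

definition backward_step ::
    "(nat \<Rightarrow> nat) \<Rightarrow> (nat \<Rightarrow> nat) \<Rightarrow> (nat \<times> nat \<Rightarrow> nat \<times> nat) \<Rightarrow> (nat \<Rightarrow> real) \<Rightarrow> nat \<Rightarrow> real" where
  "backward_step din dout \<sigma> f v = (\<Sum>c<din v. f (fst (\<sigma> (v, c))) / real (dout (fst (\<sigma> (v, c)))))"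

lemma weighted_sum_scale: "weighted_sum (\<lambda>v. k * f v) L = k * weighted_sum f L"
  by (induction L) (auto simp: weighted_sum_def algebra_simps)

lemma weighted_sum_children_graph:
  "weighted_sum f (children din dout (graph_child \<sigma>) L) = weighted_sum (backward_step din dout \<sigma> f) L"
proof (induction L)
  case (Cons x L)
  obtain p v a where x: "x = (p, v, a)" by (cases x)
  have "(\<Sum>(p, v, a)\<leftarrow>map (\<lambda>c. (c # p, fst (\<sigma> (v, c)), a / real (dout (fst (\<sigma> (v, c)))))) [0..<din v]. a * f v)
          = a * backward_step din dout \<sigma> f v"
    by (simp add: o_def sum_list_sum_nth atLeast0LessThan backward_step_def sum_distrib_left)
  then show ?case
    using Cons by (simp add: x weighted_sum_def children_Cons graph_child_apply)
qed (simp add: weighted_sum_def children_def)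

lemma weighted_sum_generation_graph:
  "weighted_sum f (generation din dout (graph_child \<sigma>) I t) = (backward_step din dout \<sigma> ^^ t) f I"
  by (induction t arbitrary: f) (simp add: weighted_sum_def, simp add: weighted_sum_children_graph funpow_swap1)

lemma Tails_Sigma: "Tails n dout = (SIGMA i:{..<n}. {..<dout i})"
  by (auto simp: Tails_def)

lemma Heads_Sigma: "Heads n din = (SIGMA i:{..<n}. {..<din i})"
  by (auto simp: Heads_def)

lemma finite_Tails: "finite (Tails n dout)"
  by (simp add: Tails_Sigma)

lemma finite_Heads: "finite (Heads n din)"
  by (simp add: Heads_Sigma)

lemma card_Tails: "card (Tails n dout) = (\<Sum>i<n. dout i)"
  by (simp add: Tails_Sigma card_SigmaI)

lemma card_Heads: "card (Heads n din) = (\<Sum>i<n. din i)"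
  by (simp add: Heads_Sigma card_SigmaI)

lemma configs_eq_bijections: "configs n din dout = bijections (Tails n dout) (Heads n din)"
  by (simp add: configs_def bijections_def)

lemma inv_config_in_Tails:
  assumes "\<omega> \<in> configs n din dout" "v < n" "c < din v"
  shows "inv_into (Tails n dout) \<omega> (v, c) \<in> Tails n dout"
  using assms by (intro inv_into_into) (auto simp: configs_def Heads_def bij_betw_def)

lemma backward_step_eq_Pmat:
  assumes "\<omega> \<in> configs n din dout" and "j < n"
  shows "backward_step din dout (inv_into (Tails n dout) \<omega>) g j = (\<Sum>i<n. g i * Pmat dout \<omega> i j)"
proof -
  define \<sigma> where "\<sigma> = inv_into (Tails n dout) \<omega>"
  define Tj where "Tj = {e \<in> Tails n dout. fst (\<omega> e) = j}"
  define contribution where "contribution = (\<lambda>e::nat \<times> nat. g (fst e) / real (dout (fst e)))"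
  have bij: "bij_betw \<omega> (Tails n dout) (Heads n din)"
    using assms(1) by (simp add: configs_def)
  have "\<omega> ` Tj = {y \<in> \<omega> ` Tails n dout. fst y = j}"
    by (auto simp: Tj_def)
  also have "\<dots> = Pair j ` {..<din j}"
    using bij assms(2) by (auto simp: bij_betw_def Heads_def)
  finally have "bij_betw \<sigma> (Pair j ` {..<din j}) Tj"
    unfolding \<sigma>_def using bij_betw_inv_into_subset[OF bij] by (auto simp: Tj_def)
  then have reindex: "bij_betw (\<sigma> \<circ> Pair j) {..<din j} Tj"
    by (rule bij_betw_trans[rotated]) (auto simp: bij_betw_def inj_on_def)
  have "backward_step din dout \<sigma> g j = (\<Sum>e\<in>Tj. contribution e)"
    using sum.reindex_bij_betw[OF reindex, of contribution] by (simp add: backward_step_def contribution_def)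
  also have "Tj = (SIGMA i:{..<n}. {k. k < dout i \<and> fst (\<omega> (i, k)) = j})"
    by (auto simp: Tj_def Tails_def)
  also have "(\<Sum>e\<in>\<dots>. contribution e) = (\<Sum>i<n. \<Sum>k | k < dout i \<and> fst (\<omega> (i, k)) = j. contribution (i, k))"
    by (subst sum.Sigma) (auto simp: case_prod_unfold)
  also have "\<dots> = (\<Sum>i<n. g i * Pmat dout \<omega> i j)"
    by (simp add: contribution_def Pmat_def mult.commute)
  finally show ?thesis by (simp add: \<sigma>_def)
qed

lemma pi_t_eq_backward_step:
  assumes "\<omega> \<in> configs n din dout"
  shows "j < n \<Longrightarrow> pi_t n din dout \<omega> t j =
     (backward_step din dout (inv_into (Tails n dout) \<omega>) ^^ t) (\<lambda>j. real (din j) / real (\<Sum>i<n. din i)) j"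
  by (induction t arbitrary: j) (simp_all add: backward_step_eq_Pmat[OF assms])

lemma scaled_pi_t_eq_weighted_sum:
  assumes "\<omega> \<in> configs n din dout" and "I < n"
  shows "real n * pi_t n din dout \<omega> t I =
    weighted_sum (\<lambda>v. real n * real (din v) / real (\<Sum>i<n. din i))
      (generation din dout (graph_child (inv_into (Tails n dout) \<omega>)) I t)"
  using weighted_sum_scale[of "real n" "\<lambda>v. real (din v) / real (\<Sum>i<n. din i)"]
  by (simp add: weighted_sum_generation_graph pi_t_eq_backward_step[OF assms])

section \<open>The branching process as a tree labelled by independent tails\<close>

definition forget_positions :: "node list \<Rightarrow> (nat \<times> real) list" where
  "forget_positions L = map (\<lambda>(p, v, a). (v, a)) L"

definition child_positions :: "(nat \<Rightarrow> nat) \<Rightarrow> node list \<Rightarrow> nat list set" where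
  "child_positions din L = (\<Union>(p, v, a)\<in>set L. (\<lambda>c. c # p) ` {0..<din v})"

lemma finite_child_positions: "finite (child_positions din L)"
  by (auto simp: child_positions_def)

lemma iid_list_eq_Pi_pmf:
  "iid_list k (map_pmf fst T) =
     map_pmf (\<lambda>f. map (\<lambda>c. fst (f (c # p))) [j..<j + k]) (Pi_pmf ((\<lambda>c. c # p) ` {j..<j + k}) d (\<lambda>_. T))"
proof (induction k arbitrary: j)
  case 0
  then show ?case by (simp add: map_pmf_def bind_return_pmf)
next
  case (Suc k)
  have "{j..<j + Suc k} = insert j {Suc j..<Suc j + k}"
    by auto
  then have positions: "(\<lambda>c. c # p) ` {j..<j + Suc k} = insert (j # p) ((\<lambda>c. c # p) ` {Suc j..<Suc j + k})"
    by simp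
  have "map_pmf (\<lambda>f. map (\<lambda>c. fst (f (c # p))) [j..<j + Suc k]) (Pi_pmf ((\<lambda>c. c # p) ` {j..<j + Suc k}) d (\<lambda>_. T))
      = map_pmf (\<lambda>f. map (\<lambda>c. fst (f (c # p))) [j..<j + Suc k])
          (map_pmf (\<lambda>(y, f). f(j # p := y)) (pair_pmf T (Pi_pmf ((\<lambda>c. c # p) ` {Suc j..<Suc j + k}) d (\<lambda>_. T))))"
    unfolding positions by (subst Pi_pmf_insert) auto
  also have "\<dots> = map_pmf (\<lambda>(y, f). fst y # map (\<lambda>c. fst (f (c # p))) [Suc j..<Suc j + k])
          (pair_pmf T (Pi_pmf ((\<lambda>c. c # p) ` {Suc j..<Suc j + k}) d (\<lambda>_. T)))"
    using upt_rec[of j "j + Suc k"] unfolding pmf.map_comp o_def by (intro map_pmf_cong refl) auto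
  also have "\<dots> = bind_pmf T (\<lambda>y. map_pmf (Cons (fst y)) (map_pmf (\<lambda>f. map (\<lambda>c. fst (f (c # p))) [Suc j..<Suc j + k])
        (Pi_pmf ((\<lambda>c. c # p) ` {Suc j..<Suc j + k}) d (\<lambda>_. T))))"
    by (simp add: pair_pmf_def map_pmf_def bind_assoc_pmf bind_return_pmf)
  also have "\<dots> = bind_pmf T (\<lambda>y. map_pmf (Cons (fst y)) (iid_list k (map_pmf fst T)))"
    unfolding Suc.IH[of "Suc j"] ..
  finally show ?case
    by (simp add: bind_map_pmf)
qed

lemma next_gen_eq_Pi_pmf:
  assumes "distinct (map fst L)"
  shows "next_gen n din dout (forget_positions L) =
    map_pmf (\<lambda>\<tau>. forget_positions (children din dout (tree_child \<tau>) L))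
      (Pi_pmf (child_positions din L) d (\<lambda>_. pmf_of_set (Tails n dout)))"
  using assms
proof (induction L)
  case Nil
  then show ?case by (simp add: forget_positions_def child_positions_def children_def)
next
  case (Cons x L)
  obtain p v a where x: "x = (p, v, a)" by (cases x)
  define T where "T = pmf_of_set (Tails n dout)"
  define C0 where "C0 = (\<lambda>c. c # p) ` {0..<din v}"
  have disjoint: "C0 \<inter> child_positions din L = {}"
    using Cons.prems by (force simp: x C0_def child_positions_def)
  have glue: "forget_positions (children din dout (tree_child (\<lambda>x. if x \<in> C0 then f x else g x)) (x # L))
    = map (\<lambda>j. (j, a / real (dout j))) (map (\<lambda>c. fst (f (c # p))) [0..<din v])
      @ forget_positions (children din dout (tree_child g) L)" for f g
  proof -
    have "children din dout (tree_child (\<lambda>x. if x \<in> C0 then f x else g x)) L = children din dout (tree_child g) L"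
      using disjoint by (intro children_cong) (force simp: tree_child_apply child_positions_def)
    then show ?thesis
      by (auto simp: x children_Cons forget_positions_def tree_child_apply C0_def)
  qed
  have "next_gen n din dout (forget_positions (x # L)) =
     bind_pmf (iid_list (din v) (mark_pmf n dout)) (\<lambda>cs.
       map_pmf (\<lambda>rest. map (\<lambda>j. (j, a / real (dout j))) cs @ rest) (next_gen n din dout (forget_positions L)))"
    by (simp add: x forget_positions_def)
  also have "\<dots> = map_pmf (\<lambda>(f, g). map (\<lambda>j. (j, a / real (dout j))) (map (\<lambda>c. fst (f (c # p))) [0..<din v])
        @ forget_positions (children din dout (tree_child g) L))
      (pair_pmf (Pi_pmf C0 d (\<lambda>_. T)) (Pi_pmf (child_positions din L) d (\<lambda>_. T)))"
    using Cons iid_list_eq_Pi_pmf[of "din v" T p 0 d]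
    by (simp add: mark_pmf_def T_def C0_def pair_pmf_def map_pmf_def bind_assoc_pmf bind_return_pmf)
  also have "\<dots> = map_pmf (\<lambda>(f, g). forget_positions (children din dout (tree_child (\<lambda>x. if x \<in> C0 then f x else g x)) (x # L)))
      (pair_pmf (Pi_pmf C0 d (\<lambda>_. T)) (Pi_pmf (child_positions din L) d (\<lambda>_. T)))"
    by (intro map_pmf_cong refl) (auto simp only: glue split: prod.splits)
  also have "\<dots> = map_pmf (\<lambda>\<tau>. forget_positions (children din dout (tree_child \<tau>) (x # L)))
      (Pi_pmf (C0 \<union> child_positions din L) d (\<lambda>_. T))"
    using disjoint by (subst Pi_pmf_union) (auto simp: C0_def finite_child_positions pmf.map_comp o_def case_prod_unfold)
  also have "C0 \<union> child_positions din L = child_positions din (x # L)"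
    by (simp add: x child_positions_def C0_def)
  finally show ?case by (simp add: T_def)
qed

lemma next_gen_eq_Pi_pmf_superset:
  assumes "distinct (map fst L)" "finite S" "child_positions din L \<subseteq> S"
  shows "next_gen n din dout (forget_positions L) =
    map_pmf (\<lambda>\<tau>. forget_positions (children din dout (tree_child \<tau>) L)) (Pi_pmf S d (\<lambda>_. pmf_of_set (Tails n dout)))"
proof -
  have "children din dout (tree_child (\<lambda>x. if x \<in> child_positions din L then \<tau> x else d)) L
          = children din dout (tree_child \<tau>) L" for \<tau>
    by (intro children_cong) (force simp: tree_child_apply child_positions_def)
  moreover have "next_gen n din dout (forget_positions L) =
    map_pmf (\<lambda>\<tau>. forget_positions (children din dout (tree_child \<tau>) L))
      (map_pmf (\<lambda>f x. if x \<in> child_positions din L then f x else d) (Pi_pmf S d (\<lambda>_. pmf_of_set (Tails n dout))))"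
    by (subst Pi_pmf_subset[symmetric]) (use assms in \<open>auto intro: next_gen_eq_Pi_pmf\<close>)
  ultimately show ?thesis
    by (simp add: pmf.map_comp o_def)
qed

definition tree_generations ::
    "(nat \<Rightarrow> nat) \<Rightarrow> (nat \<Rightarrow> nat) \<Rightarrow> nat \<Rightarrow> nat \<Rightarrow> (nat list \<Rightarrow> nat \<times> nat) \<Rightarrow> (nat \<times> real) list list" where
  "tree_generations din dout h I \<tau> = map (\<lambda>s. forget_positions (generation din dout (tree_child \<tau>) I s)) [0..<Suc h]"

lemma child_positions_generation_tree:
  assumes "I < n" and "\<And>v. v < n \<Longrightarrow> din v \<le> D" and "\<And>q. q \<in> positions D t \<Longrightarrow> \<tau> q \<in> Tails n dout"
  shows "child_positions din (generation din dout (tree_child \<tau>) I t) \<subseteq> level D (Suc t)"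
proof
  fix x assume "x \<in> child_positions din (generation din dout (tree_child \<tau>) I t)"
  then obtain p v a c where node: "(p, v, a) \<in> set (generation din dout (tree_child \<tau>) I t)"
    and c: "c < din v" and x: "x = c # p"
    by (auto simp: child_positions_def)
  have child_bound: "tree_child \<tau> p v c < n"
    if "v < n" "c < din v" "length p < t" "set p \<subseteq> {..<D}" for p v c
    using that assms(2) assms(3)[of "c # p"] by (fastforce simp: tree_child_apply positions_def Tails_def)
  have "length p = t" "path_active din (tree_child \<tau>) I p" "path_vertex (tree_child \<tau>) I p = v"
    using mem_generation[OF node] by auto
  then have "v < n \<and> set p \<subseteq> {..<D}" and "length p = t"
    using path_active_bounded[of I n din D t "tree_child \<tau>" p, OF assms(1,2) child_bound] by auto
  then show "x \<in> level D (Suc t)"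
    using c x assms(2) by (force simp: level_def)
qed

lemma generation_tree_glue:
  assumes "\<And>x. x \<notin> positions D t \<Longrightarrow> f x = d" and "\<And>x. x \<notin> level D (Suc t) \<Longrightarrow> g x = d"
  defines "glue \<equiv> \<lambda>x. if x \<in> positions D t then f x else g x"
  shows "s \<le> t \<Longrightarrow>
      generation din dout (tree_child glue) I s = generation din dout (tree_child f) I s"
    and "generation din dout (tree_child glue) I (Suc t) =
      children din dout (tree_child g) (generation din dout (tree_child f) I t)"
proof -
  show le: "generation din dout (tree_child glue) I s = generation din dout (tree_child f) I s"
    if "s \<le> t" for s
    using that assms by (intro generation_cong) (auto simp: tree_child_apply glue_def level_def)
  have "children din dout (tree_child glue) (generation din dout (tree_child f) I t)
          = children din dout (tree_child g) (generation din dout (tree_child f) I t)"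
    by (intro children_cong) (auto dest!: mem_generation simp: tree_child_apply glue_def positions_def)
  then show "generation din dout (tree_child glue) I (Suc t) =
      children din dout (tree_child g) (generation din dout (tree_child f) I t)"
    using le[of t] by simp
qed

lemma next_gen_last_tree_generations:
  assumes "I < n" and "Tails n dout \<noteq> {}" and "\<And>v. v < n \<Longrightarrow> din v \<le> D"
    and "\<And>q. q \<in> positions D t \<Longrightarrow> f q \<in> Tails n dout" and "\<And>q. q \<notin> positions D t \<Longrightarrow> f q = d"
  shows "map_pmf (\<lambda>g. tree_generations din dout t I f @ [g]) (next_gen n din dout (last (tree_generations din dout t I f)))
    = map_pmf (\<lambda>g. tree_generations din dout (Suc t) I (\<lambda>x. if x \<in> positions D t then f x else g x))
        (Pi_pmf (level D (Suc t)) d (\<lambda>_. pmf_of_set (Tails n dout)))"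
    (is "_ = map_pmf _ ?Q")
proof -
  have "next_gen n din dout (forget_positions (generation din dout (tree_child f) I t)) =
      map_pmf (\<lambda>g. forget_positions (children din dout (tree_child g) (generation din dout (tree_child f) I t))) ?Q"
    using assms(1,3,4)
    by (intro next_gen_eq_Pi_pmf_superset distinct_generation finite_level child_positions_generation_tree)
  moreover have "tree_generations din dout (Suc t) I (\<lambda>x. if x \<in> positions D t then f x else g x) =
      tree_generations din dout t I f @
        [forget_positions (children din dout (tree_child g) (generation din dout (tree_child f) I t))]"
    if "g \<in> set_pmf ?Q" for g
  proof -
    have "\<And>q. q \<notin> level D (Suc t) \<Longrightarrow> g q = d"
      using that assms(2) by (auto simp: set_Pi_pmf finite_level finite_Tails PiE_dflt_def)
    from generation_tree_glue[OF assms(5) this] show ?thesis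
      by (auto simp: tree_generations_def intro!: map_cong)
  qed
  ultimately show ?thesis
    by (auto simp: tree_generations_def pmf.map_comp intro!: map_pmf_cong)
qed

lemma gens_eq_Pi_pmf:
  assumes "n > 0" and "Tails n dout \<noteq> {}" and "\<And>v. v < n \<Longrightarrow> din v \<le> D"
  shows "gens n din dout t = map_pmf (\<lambda>(I, \<tau>). tree_generations din dout t I \<tau>)
     (pair_pmf (pmf_of_set {..<n}) (Pi_pmf (positions D t) d (\<lambda>_. pmf_of_set (Tails n dout))))"
proof (induction t)
  case 0
  show ?case
    by (simp add: positions_0 map_pmf_def pair_pmf_def bind_return_pmf bind_assoc_pmf
        tree_generations_def forget_positions_def)
next
  case (Suc t)
  define T where "T = pmf_of_set (Tails n dout)"
  define U where "U = pmf_of_set {..<n}"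
  define P where "P = Pi_pmf (positions D t) d (\<lambda>_. T)"
  define Q where "Q = Pi_pmf (level D (Suc t)) d (\<lambda>_. T)"
  define glue :: "(nat list \<Rightarrow> nat \<times> nat) \<times> (nat list \<Rightarrow> nat \<times> nat) \<Rightarrow> nat list \<Rightarrow> nat \<times> nat"
    where "glue = (\<lambda>(f, g) x. if x \<in> positions D t then f x else g x)"
  have "set_pmf U = {..<n}"
    using assms(1) unfolding U_def by (subst set_pmf_of_set) auto
  moreover have "set_pmf P = PiE_dflt (positions D t) d (\<lambda>_. Tails n dout)"
    using assms(2) by (simp add: P_def T_def set_Pi_pmf finite_positions finite_Tails o_def)
  ultimately have step: "map_pmf (\<lambda>g. tree_generations din dout t I f @ [g])
                (next_gen n din dout (last (tree_generations din dout t I f)))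
      = map_pmf (\<lambda>g. tree_generations din dout (Suc t) I (glue (f, g))) Q"
    if "I \<in> set_pmf U" "f \<in> set_pmf P" for I f
    using that assms(2,3) unfolding Q_def T_def glue_def prod.case
    by (intro next_gen_last_tree_generations) (auto simp: PiE_dflt_def)
  have "gens n din dout (Suc t) = bind_pmf U (\<lambda>I. bind_pmf P (\<lambda>f.
      map_pmf (\<lambda>g. tree_generations din dout t I f @ [g]) (next_gen n din dout (last (tree_generations din dout t I f)))))"
    using Suc.IH by (simp add: U_def P_def T_def bind_map_pmf pair_pmf_def bind_assoc_pmf bind_return_pmf)
  also have "\<dots> = bind_pmf U (\<lambda>I. bind_pmf P (\<lambda>f. map_pmf (\<lambda>g. tree_generations din dout (Suc t) I (glue (f, g))) Q))"
    using step by (intro bind_pmf_cong refl) auto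
  also have "\<dots> = map_pmf (\<lambda>(I, \<tau>). tree_generations din dout (Suc t) I \<tau>) (pair_pmf U (map_pmf glue (pair_pmf P Q)))"
    by (simp add: map_pmf_def pair_pmf_def bind_assoc_pmf bind_return_pmf)
  also have "map_pmf glue (pair_pmf P Q) = Pi_pmf (positions D (Suc t)) d (\<lambda>_. T)"
    unfolding P_def Q_def positions_Suc glue_def
    by (rule Pi_pmf_union[symmetric]) (auto simp: finite_positions finite_level positions_level_disjoint)
  finally show ?case
    by (simp add: U_def T_def)
qed

section \<open>Coupling the environment with the branching process\<close>

definition coupled_labels ::
    "nat list set \<Rightarrow> (nat \<Rightarrow> nat) \<Rightarrow> nat \<Rightarrow> (nat \<times> nat \<Rightarrow> nat \<times> nat) \<Rightarrow> (nat list \<Rightarrow> nat \<times> nat)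
       \<Rightarrow> nat list \<Rightarrow> nat \<times> nat" where
  "coupled_labels P din I \<sigma> \<tau> q =
     (if q \<in> P \<and> path_active din (graph_child \<sigma>) I q
      then \<sigma> (path_vertex (graph_child \<sigma>) I (tl q), hd q) else \<tau> q)"

definition observation ::
    "nat \<Rightarrow> (nat \<Rightarrow> nat) \<Rightarrow> (nat \<Rightarrow> nat) \<Rightarrow> nat \<Rightarrow> nat \<Rightarrow> (nat list \<Rightarrow> nat \<times> nat) \<Rightarrow> real list" where
  "observation n din dout h I \<tau> =
     map (\<lambda>s. weighted_sum (\<lambda>v. real n * real (din v) / real (\<Sum>k<n. din k))
                (generation din dout (tree_child \<tau>) I s)) [0..<Suc h]"

lemma generation_graph_eq_coupled:
  assumes "I < n" and "\<And>v c. v < n \<Longrightarrow> c < din v \<Longrightarrow> fst (\<sigma> (v, c)) < n"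
    and "\<And>v. v < n \<Longrightarrow> din v \<le> D" and "s \<le> h"
  shows "generation din dout (graph_child \<sigma>) I s =
           generation din dout (tree_child (coupled_labels (positions D h) din I \<sigma> \<tau>)) I s"
proof (rule generation_cong)
  fix p c
  assume p: "length p < s" "path_active din (graph_child \<sigma>) I p"
    and c: "c < din (path_vertex (graph_child \<sigma>) I p)"
  have "path_vertex (graph_child \<sigma>) I p < n \<and> set p \<subseteq> {..<D}"
    using p assms(2) by (intro path_active_bounded[OF assms(1,3), where k = s]) (auto simp: graph_child_apply)
  then have "c # p \<in> positions D h"
    using c p(1) assms(3,4) by (fastforce simp: positions_def)
  then show "graph_child \<sigma> p (path_vertex (graph_child \<sigma>) I p) c =
      tree_child (coupled_labels (positions D h) din I \<sigma> \<tau>) p (path_vertex (graph_child \<sigma>) I p) c"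
    using p(2) c by (simp add: coupled_labels_def tree_child_apply graph_child_apply)
qed

lemma card_configs:
  assumes "card (Tails n dout) = card (Heads n din)"
  shows "card (configs n din dout) = fact (card (Tails n dout))"
  unfolding configs_eq_bijections using assms by (intro card_bijections) (auto simp: finite_Tails finite_Heads)

lemma finite_configs: "finite (configs n din dout)"
  unfolding configs_eq_bijections by (intro finite_bijections finite_Tails finite_Heads)

lemma set_config_pmf:
  assumes "card (Tails n dout) = card (Heads n din)"
  shows "set_pmf (config_pmf n din dout) = configs n din dout"
proof -
  have "configs n din dout \<noteq> {}"
    using card_configs[OF assms] by (metis card.empty fact_nonzero)
  then show ?thesis
    by (simp add: config_pmf_def finite_configs)
qed

lemma M_law_eq_observation:
  assumes "n > 0" and "Tails n dout \<noteq> {}" and "\<And>v. v < n \<Longrightarrow> din v \<le> D"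
  shows "M_law n din dout h = map_pmf (\<lambda>(I, \<tau>). observation n din dout h I \<tau>)
     (pair_pmf (pmf_of_set {..<n}) (Pi_pmf (positions D h) d (\<lambda>_. pmf_of_set (Tails n dout))))"
proof -
  have sum_forget: "sum_list (map (\<lambda>(i, a). real n * real (din i) / M * a) (forget_positions L))
      = weighted_sum (\<lambda>v. real n * real (din v) / M) L" for L M
    by (induction L) (auto simp: weighted_sum_def forget_positions_def)
  have "M_law n din dout h = map_pmf (map (\<lambda>g. sum_list (map (\<lambda>(i, a). real n * real (din i) / real (\<Sum>k<n. din k) * a) g)))
      (map_pmf (\<lambda>(I, \<tau>). tree_generations din dout h I \<tau>)
        (pair_pmf (pmf_of_set {..<n}) (Pi_pmf (positions D h) d (\<lambda>_. pmf_of_set (Tails n dout)))))"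
    unfolding M_law_def by (subst gens_eq_Pi_pmf[where D = D and d = d]) (use assms in auto)
  then show ?thesis
    unfolding pmf.map_comp
    by (auto simp: tree_generations_def observation_def sum_forget intro!: map_pmf_cong)
qed

lemma env_law_eq_observation:
  assumes "n > 0" and "card (Tails n dout) = card (Heads n din)" and "\<And>v. v < n \<Longrightarrow> din v \<le> D"
  shows "env_law n din dout h = map_pmf
      (\<lambda>(I, \<omega>, \<tau>). observation n din dout h I (coupled_labels (positions D h) din I (inv_into (Tails n dout) \<omega>) \<tau>))
      (pair_pmf (pmf_of_set {..<n}) (pair_pmf (config_pmf n din dout) (Pi_pmf (positions D h) d (\<lambda>_. pmf_of_set (Tails n dout)))))"
    (is "_ = map_pmf ?F (pair_pmf ?U (pair_pmf ?C ?T))")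
proof -
  define scaled_pi where "scaled_pi = (\<lambda>\<omega> I. map (\<lambda>t. real n * pi_t n din dout \<omega> t I) [0..<Suc h])"
  have set_U: "set_pmf ?U = {..<n}"
    using assms(1) by (subst set_pmf_of_set) auto
  have observation_eq: "?F (I, \<omega>, \<tau>) = scaled_pi \<omega> I" if "I < n" "\<omega> \<in> configs n din dout" for I \<omega> \<tau>
  proof -
    have "\<And>v c. v < n \<Longrightarrow> c < din v \<Longrightarrow> fst (inv_into (Tails n dout) \<omega> (v, c)) < n"
      using inv_config_in_Tails[OF that(2)] by (force simp: Tails_def)
    then show ?thesis
      using that generation_graph_eq_coupled[OF that(1) _ assms(3)]
      by (auto simp: scaled_pi_def observation_def scaled_pi_t_eq_weighted_sum intro!: map_cong)
  qed
  have "map_pmf ?F (pair_pmf ?U (pair_pmf ?C ?T)) =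
      bind_pmf ?U (\<lambda>I. bind_pmf ?C (\<lambda>\<omega>. bind_pmf ?T (\<lambda>\<tau>. return_pmf (?F (I, \<omega>, \<tau>)))))"
    by (simp add: map_pmf_def pair_pmf_def bind_assoc_pmf bind_return_pmf)
  also have "\<dots> = bind_pmf ?U (\<lambda>I. bind_pmf ?C (\<lambda>\<omega>. return_pmf (scaled_pi \<omega> I)))"
    using observation_eq set_U set_config_pmf[OF assms(2)] by (intro bind_pmf_cong refl) auto
  also have "\<dots> = bind_pmf ?C (\<lambda>\<omega>. bind_pmf ?U (\<lambda>I. return_pmf (scaled_pi \<omega> I)))"
    by (rule bind_commute_pmf)
  also have "\<dots> = env_law n din dout h"
    by (simp add: env_law_def map_pmf_def scaled_pi_def)
  finally show ?thesis ..
qed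

section \<open>The coupling dominates the branching process on collision-free labellings\<close>

definition tree_head :: "nat \<Rightarrow> (nat list \<Rightarrow> nat \<times> nat) \<Rightarrow> nat list \<Rightarrow> nat \<times> nat" where
  "tree_head I \<tau> q = (path_vertex (tree_child \<tau>) I (tl q), hd q)"

definition collision_free :: "nat list set \<Rightarrow> nat \<Rightarrow> (nat list \<Rightarrow> nat \<times> nat) \<Rightarrow> bool" where
  "collision_free P I \<tau> \<longleftrightarrow>
     (\<forall>q1\<in>P. \<forall>q2\<in>P. q1 \<noteq> q2 \<longrightarrow> fst (\<tau> q1) \<noteq> fst (\<tau> q2)) \<and> (\<forall>q\<in>P. fst (\<tau> q) \<noteq> I)"

lemma path_active_graph_eq_tree:
  assumes "\<omega> \<in> configs n din dout"
    and "\<And>q. q \<in> positions D h \<Longrightarrow> \<tau> q \<in> Tails n dout"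
    and "\<And>q. q \<in> positions D h \<Longrightarrow> path_active din (tree_child \<tau>) I q \<Longrightarrow> \<omega> (\<tau> q) = tree_head I \<tau> q"
  defines "\<sigma> \<equiv> inv_into (Tails n dout) \<omega>"
  shows "q = [] \<or> q \<in> positions D h \<Longrightarrow>
     path_active din (graph_child \<sigma>) I q = path_active din (tree_child \<tau>) I q \<and>
     (path_active din (tree_child \<tau>) I q \<longrightarrow> path_vertex (graph_child \<sigma>) I q = path_vertex (tree_child \<tau>) I q)"
proof (induction q)
  case (Cons c p)
  then have q: "c # p \<in> positions D h" and IH:
    "path_active din (graph_child \<sigma>) I p = path_active din (tree_child \<tau>) I p \<and>
     (path_active din (tree_child \<tau>) I p \<longrightarrow> path_vertex (graph_child \<sigma>) I p = path_vertex (tree_child \<tau>) I p)"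
    using Cons_in_positions_tl by auto
  have "\<sigma> (path_vertex (tree_child \<tau>) I p, c) = \<tau> (c # p)"
    if "path_active din (tree_child \<tau>) I (c # p)"
    using assms(1) assms(2)[OF q] assms(3)[OF q that] unfolding \<sigma>_def
    by (intro inv_into_f_eq) (auto simp: tree_head_def configs_def bij_betw_def)
  then show ?case
    using IH by (auto, simp add: tree_child_apply graph_child_apply)
qed simp

lemma coupled_labels_eq:
  assumes "\<omega> \<in> configs n din dout"
    and "\<And>q. q \<in> positions D h \<Longrightarrow> \<tau> q \<in> Tails n dout"
    and "\<And>q. q \<in> positions D h \<Longrightarrow> path_active din (tree_child \<tau>) I q \<Longrightarrow> \<omega> (\<tau> q) = tree_head I \<tau> q"
    and "\<And>q. q \<in> positions D h \<Longrightarrow> \<not> path_active din (tree_child \<tau>) I q \<Longrightarrow> \<tau>' q = \<tau> q"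
    and "\<And>q. q \<notin> positions D h \<Longrightarrow> \<tau>' q = \<tau> q"
  shows "coupled_labels (positions D h) din I (inv_into (Tails n dout) \<omega>) \<tau>' = \<tau>"
proof
  fix q
  define \<sigma> where "\<sigma> = inv_into (Tails n dout) \<omega>"
  note active_eq = path_active_graph_eq_tree[OF assms(1-3)]
  show "coupled_labels (positions D h) din I \<sigma> \<tau>' q = \<tau> q"
  proof (cases "q \<in> positions D h \<and> path_active din (tree_child \<tau>) I q")
    case True
    then obtain c p where q: "q = c # p" and "p = [] \<or> p \<in> positions D h"
      by (cases q) (auto simp: positions_def dest: Cons_in_positions_tl)
    then have "path_vertex (graph_child \<sigma>) I p = path_vertex (tree_child \<tau>) I p"
      using True active_eq[where q = p] by (simp add: \<sigma>_def)
    moreover have "\<sigma> (tree_head I \<tau> q) = \<tau> q"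
      using True assms(1,2,3) unfolding \<sigma>_def
      by (intro inv_into_f_eq) (auto simp: configs_def bij_betw_def)
    ultimately show ?thesis
      using True active_eq[where q = q] by (simp add: coupled_labels_def \<sigma>_def q tree_head_def)
  next
    case False
    then show ?thesis
      using active_eq[where q = q] assms(4,5) by (auto simp: coupled_labels_def \<sigma>_def)
  qed
qed

lemma inj_on_collision_free:
  assumes "collision_free P I \<tau>"
  shows "inj_on \<tau> P"
  using assms unfolding collision_free_def inj_on_def by metis

lemma inj_on_tree_head:
  assumes "collision_free (positions D h) I \<tau>"
  shows "inj_on (tree_head I \<tau>) (positions D h)"
proof
  fix q1 q2 assume q: "q1 \<in> positions D h" "q2 \<in> positions D h" and eq: "tree_head I \<tau> q1 = tree_head I \<tau> q2"
  obtain c1 p1 c2 p2 where q1: "q1 = c1 # p1" and q2: "q2 = c2 # p2"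
    using q by (cases q1; cases q2) (auto simp: positions_def)
  have parents: "p1 = [] \<or> p1 \<in> positions D h" "p2 = [] \<or> p2 \<in> positions D h"
    using q q1 q2 Cons_in_positions_tl by blast+
  have "path_vertex (tree_child \<tau>) I p1 = path_vertex (tree_child \<tau>) I p2" and "c1 = c2"
    using eq by (auto simp: tree_head_def q1 q2)
  moreover have "path_vertex (tree_child \<tau>) I p = (if p = [] then I else fst (\<tau> p))" for p
    by (cases p) (auto simp: tree_child_apply)
  ultimately have "p1 = p2"
    using parents assms unfolding collision_free_def by (metis (full_types))
  then show "q1 = q2"
    using \<open>c1 = c2\<close> q1 q2 by simp
qed

lemma tree_head_in_Heads:
  assumes "I < n" and "\<And>q. q \<in> positions D h \<Longrightarrow> \<tau> q \<in> Tails n dout"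
    and "q \<in> positions D h" and "path_active din (tree_child \<tau>) I q"
  shows "tree_head I \<tau> q \<in> Heads n din"
proof -
  obtain c p where q: "q = c # p"
    using assms(3) by (cases q) (auto simp: positions_def)
  have "path_vertex (tree_child \<tau>) I p < n"
  proof (cases p)
    case (Cons c' p')
    then have "\<tau> p \<in> Tails n dout"
      using Cons_in_positions_tl assms(2,3) q by blast
    then show ?thesis
      using Cons by (auto simp: Tails_def tree_child_apply)
  qed (simp add: assms(1))
  then show ?thesis
    using assms(4) by (simp add: q tree_head_def Heads_def)
qed

lemma card_configs_consistent:
  assumes "card (Tails n dout) = card (Heads n din)" and "I < n"
    and "\<And>q. q \<in> positions D h \<Longrightarrow> \<tau> q \<in> Tails n dout" and "collision_free (positions D h) I \<tau>"
    and "A \<subseteq> {q \<in> positions D h. path_active din (tree_child \<tau>) I q}"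
  shows "card {\<omega> \<in> configs n din dout. \<forall>q\<in>A. \<omega> (\<tau> q) = tree_head I \<tau> q}
           = fact (card (Tails n dout) - card A)"
  unfolding configs_eq_bijections
proof (rule card_bijections_fixing)
  have A: "A \<subseteq> positions D h"
    using assms(5) by auto
  then show "finite A"
    using finite_positions finite_subset by blast
  show "inj_on \<tau> A" "inj_on (tree_head I \<tau>) A"
    using inj_on_subset[OF inj_on_collision_free[OF assms(4)] A]
      inj_on_subset[OF inj_on_tree_head[OF assms(4)] A] by simp_all
  show "\<tau> ` A \<subseteq> Tails n dout" "tree_head I \<tau> ` A \<subseteq> Heads n din"
    using assms(5) assms(3) tree_head_in_Heads[OF assms(2,3)] by auto
qed (use assms(1) in \<open>simp_all add: finite_Tails finite_Heads\<close>)

lemma fact_le_card_consistent: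
  assumes "card (Tails n dout) = card (Heads n din)" and "I < n"
    and "\<And>q. q \<in> positions D h \<Longrightarrow> \<tau> q \<in> Tails n dout" and "collision_free (positions D h) I \<tau>"
  defines "A \<equiv> {q \<in> positions D h. path_active din (tree_child \<tau>) I q}"
  shows "fact (card (Tails n dout)) \<le>
     card {\<omega> \<in> configs n din dout. \<forall>q\<in>A. \<omega> (\<tau> q) = tree_head I \<tau> q} *
     card (PiE_dflt (positions D h) d (\<lambda>q. if q \<in> A then Tails n dout else {\<tau> q}))"
proof -
  have A: "A \<subseteq> positions D h"
    by (auto simp: A_def)
  have "card A = card (\<tau> ` A)"
    using inj_on_subset[OF inj_on_collision_free[OF assms(4)] A] by (simp add: card_image)
  also have "\<dots> \<le> card (Tails n dout)"
    using A assms(3) by (auto simp: finite_Tails intro!: card_mono)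
  finally have "fact (card (Tails n dout)) \<le> fact (card (Tails n dout) - card A) * card (Tails n dout) ^ card A"
    by (rule fact_le_fact_diff_mult_power)
  then show ?thesis
    using card_configs_consistent[OF assms(1-4), of A] card_PiE_dflt_free_on[OF finite_positions A finite_Tails]
    by (simp add: A_def)
qed

lemma pmf_config_pmf:
  assumes "card (Tails n dout) = card (Heads n din)" and "\<omega> \<in> configs n din dout"
  shows "pmf (config_pmf n din dout) \<omega> = 1 / fact (card (Tails n dout))"
  using assms card_configs[OF assms(1)] by (subst config_pmf_def, subst pmf_of_set) (auto simp: finite_configs)

lemma consistent_subset_preimage_coupled:
  fixes I :: nat and din :: "nat \<Rightarrow> nat"
  assumes "\<And>q. q \<in> positions D h \<Longrightarrow> \<tau> q \<in> Tails n dout" and "\<And>q. q \<notin> positions D h \<Longrightarrow> \<tau> q = d"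
  defines "A \<equiv> {q \<in> positions D h. path_active din (tree_child \<tau>) I q}"
  shows "{I} \<times> ({\<omega> \<in> configs n din dout. \<forall>q\<in>A. \<omega> (\<tau> q) = tree_head I \<tau> q} \<times>
                 PiE_dflt (positions D h) d (\<lambda>q. if q \<in> A then Tails n dout else {\<tau> q}))
    \<subseteq> (\<lambda>(I, \<omega>, \<tau>'). (I, coupled_labels (positions D h) din I (inv_into (Tails n dout) \<omega>) \<tau>')) -` {(I, \<tau>)}"
proof
  fix x assume "x \<in> {I} \<times> ({\<omega> \<in> configs n din dout. \<forall>q\<in>A. \<omega> (\<tau> q) = tree_head I \<tau> q} \<times>
                 PiE_dflt (positions D h) d (\<lambda>q. if q \<in> A then Tails n dout else {\<tau> q}))"
  then obtain \<omega> \<tau>' where x: "x = (I, \<omega>, \<tau>')"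
    and \<omega>: "\<omega> \<in> configs n din dout" "\<forall>q\<in>A. \<omega> (\<tau> q) = tree_head I \<tau> q"
    and \<tau>': "\<tau>' \<in> PiE_dflt (positions D h) d (\<lambda>q. if q \<in> A then Tails n dout else {\<tau> q})"
    by blast
  have "\<And>q. q \<notin> positions D h \<Longrightarrow> \<tau>' q = \<tau> q" "\<And>q. q \<in> positions D h \<Longrightarrow> q \<notin> A \<Longrightarrow> \<tau>' q = \<tau> q"
    using \<tau>' assms(2) by (auto simp: PiE_dflt_def)
  then have "coupled_labels (positions D h) din I (inv_into (Tails n dout) \<omega>) \<tau>' = \<tau>"
    using \<omega> assms(1) by (intro coupled_labels_eq) (auto simp: A_def)
  then show "x \<in> (\<lambda>(I, \<omega>, \<tau>'). (I, coupled_labels (positions D h) din I (inv_into (Tails n dout) \<omega>) \<tau>')) -` {(I, \<tau>)}"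
    by (simp add: x)
qed

text \<open>
  Each configuration consistent with \<open>\<tau>\<close> on the active positions, together with arbitrary labels
  there, is mapped to \<open>\<tau>\<close>; by \<open>fact_le_card_consistent\<close> these \<open>m!\<close> or more choices compensate
  for the factor \<open>1/m!\<close> of the uniform configuration.
\<close>

lemma pmf_le_pmf_coupled:
  assumes "card (Tails n dout) = card (Heads n din)" and "Tails n dout \<noteq> {}" and "I < n"
    and "\<And>q. q \<in> positions D h \<Longrightarrow> \<tau> q \<in> Tails n dout" and "\<And>q. q \<notin> positions D h \<Longrightarrow> \<tau> q = d"
    and "collision_free (positions D h) I \<tau>"
  shows "pmf (pair_pmf (pmf_of_set {..<n}) (Pi_pmf (positions D h) d (\<lambda>_. pmf_of_set (Tails n dout)))) (I, \<tau>)
    \<le> pmf (map_pmf (\<lambda>(I, \<omega>, \<tau>'). (I, coupled_labels (positions D h) din I (inv_into (Tails n dout) \<omega>) \<tau>'))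
           (pair_pmf (pmf_of_set {..<n})
             (pair_pmf (config_pmf n din dout) (Pi_pmf (positions D h) d (\<lambda>_. pmf_of_set (Tails n dout))))))
         (I, \<tau>)"
    (is "pmf (pair_pmf ?U ?T) _ \<le> pmf (map_pmf ?\<Phi> ?V) _")
proof -
  define P where "P = positions D h"
  define m where "m = card (Tails n dout)"
  define A where "A = {q \<in> P. path_active din (tree_child \<tau>) I q}"
  define S where "S = {I} \<times> ({\<omega> \<in> configs n din dout. \<forall>q\<in>A. \<omega> (\<tau> q) = tree_head I \<tau> q} \<times>
                                 PiE_dflt P d (\<lambda>q. if q \<in> A then Tails n dout else {\<tau> q}))"
  define p where "p = 1 / real n * (1 / fact m * (1 / real m) ^ card P)"
  have pmf_U: "pmf ?U I = 1 / real n"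
    using assms(3) by (subst pmf_of_set) auto
  have pmf_T: "pmf ?T \<tau>' = (1 / real m) ^ card P"
    if "\<And>q. q \<in> P \<Longrightarrow> \<tau>' q \<in> Tails n dout" "\<And>q. q \<notin> P \<Longrightarrow> \<tau>' q = d" for \<tau>'
    unfolding m_def P_def using that assms(2) by (intro pmf_Pi_pmf_of_set) (auto simp: P_def finite_positions finite_Tails)
  have "fact m \<le> card S"
    using fact_le_card_consistent[OF assms(1,3,4,6), of d] by (simp add: S_def A_def P_def m_def card_cartesian_product)
  then have "real (fact m) \<le> real (card S)"
    by (simp only: of_nat_le_iff)
  have pmf_S: "pmf ?V x = p" if "x \<in> S" for x
  proof -
    obtain \<omega> \<tau>' where x: "x = (I, \<omega>, \<tau>')" and \<omega>: "\<omega> \<in> configs n din dout"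
      and \<tau>': "\<tau>' \<in> PiE_dflt P d (\<lambda>q. if q \<in> A then Tails n dout else {\<tau> q})"
      using \<open>x \<in> S\<close> unfolding S_def by blast
    have "\<And>q. q \<in> P \<Longrightarrow> \<tau>' q \<in> Tails n dout" "\<And>q. q \<notin> P \<Longrightarrow> \<tau>' q = d"
      using \<tau>' assms(4) by (auto simp: PiE_dflt_def P_def split: if_splits)
    then show ?thesis
      using pmf_U pmf_T pmf_config_pmf[OF assms(1) \<omega>] by (simp add: x pmf_pair p_def m_def)
  qed
  have S_preimage: "S \<subseteq> ?\<Phi> -` {(I, \<tau>)}"
    unfolding S_def A_def P_def using assms(4,5) by (rule consistent_subset_preimage_coupled)
  have "finite S"
    unfolding S_def P_def using finite_configs finite_positions finite_Tails
    by (intro finite_cartesian_product finite_PiE_dflt) auto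
  have "pmf (pair_pmf ?U ?T) (I, \<tau>) = real (fact m) * p"
    using pmf_U pmf_T[of \<tau>] assms(4,5) by (simp add: pmf_pair P_def p_def)
  also have "\<dots> \<le> real (card S) * p"
    using \<open>real (fact m) \<le> real (card S)\<close> by (intro mult_right_mono) (auto simp: p_def)
  also have "\<dots> = measure_pmf.prob ?V S"
    using pmf_S \<open>finite S\<close> by (simp add: measure_measure_pmf_finite)
  also have "\<dots> \<le> measure_pmf.prob ?V (?\<Phi> -` {(I, \<tau>)})"
    using S_preimage by (rule measure_pmf.finite_measure_mono) simp
  also have "\<dots> = pmf (map_pmf ?\<Phi> ?V) (I, \<tau>)"
    by (simp add: pmf_map)
  finally show ?thesis .
qed
section \<open>Probability of a collision\<close>

lemma card_Tails_vertex: "i < n \<Longrightarrow> card {e \<in> Tails n dout. fst e = i} = dout i"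
proof -
  assume "i < n"
  then have "{e \<in> Tails n dout. fst e = i} = {i} \<times> {..<dout i}"
    by (auto simp: Tails_def)
  then show ?thesis
    by (simp add: card_cartesian_product)
qed

lemma prob_same_vertex_le:
  assumes "finite P" "q1 \<in> P" "q2 \<in> P" "q1 \<noteq> q2" "Tails n dout \<noteq> {}" "\<And>i. i < n \<Longrightarrow> dout i \<le> D"
  shows "measure_pmf.prob (Pi_pmf P d (\<lambda>_. pmf_of_set (Tails n dout))) {\<tau>. fst (\<tau> q1) = fst (\<tau> q2)}
           \<le> real D / real (card (Tails n dout))"
proof -
  define T where "T = Tails n dout"
  have "(T \<times> T) \<inter> {(x, y). fst x = fst y} = (SIGMA x:T. {y \<in> T. fst y = fst x})"
    by auto
  then have "card ((T \<times> T) \<inter> {(x, y). fst x = fst y}) = (\<Sum>x\<in>T. card {y \<in> T. fst y = fst x})"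
    by (simp add: card_SigmaI T_def finite_Tails)
  also have "\<dots> = (\<Sum>x\<in>T. dout (fst x))"
    unfolding T_def by (intro sum.cong refl card_Tails_vertex) (auto simp: Tails_def)
  also have "\<dots> \<le> card T * D"
    using sum_bounded_above[of T "\<lambda>x. dout (fst x)" D] assms(6) by (auto simp: T_def Tails_def)
  finally have "real (card ((T \<times> T) \<inter> {(x, y). fst x = fst y})) / (card T * card T) \<le> real (card T * D) / (card T * card T)"
    by (intro divide_right_mono) (simp_all only: of_nat_le_iff of_nat_0_le_iff)
  moreover have "measure_pmf.prob (Pi_pmf P d (\<lambda>_. pmf_of_set T)) {\<tau>. fst (\<tau> q1) = fst (\<tau> q2)}
      = measure_pmf.prob (pair_pmf (pmf_of_set T) (pmf_of_set T)) {(x, y). fst x = fst y}"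
  proof -
    have preimage: "{\<tau>. fst (\<tau> q1) = fst (\<tau> q2)} = (\<lambda>\<tau>. (\<tau> q1, \<tau> q2)) -` {(x, y). fst x = fst y}"
      by auto
    show ?thesis
      unfolding preimage measure_map_pmf[symmetric] Pi_pmf_two_components[OF assms(1-4)] ..
  qed
  ultimately show ?thesis
    using assms(5) by (simp add: measure_pair_pmf_of_set finite_Tails T_def)
qed

lemma prob_root_vertex_le:
  assumes "finite P" "q \<in> P" "n > 0" "Tails n dout \<noteq> {}" "card (Tails n dout) \<le> n * D"
  shows "measure_pmf.prob (pair_pmf (pmf_of_set {..<n}) (Pi_pmf P d (\<lambda>_. pmf_of_set (Tails n dout))))
           {(I, \<tau>). fst (\<tau> q) = I} \<le> real D / real (card (Tails n dout))"
proof -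
  define T where "T = Tails n dout"
  have map_eq: "map_pmf (\<lambda>(I, \<tau>). (I, \<tau> q)) (pair_pmf (pmf_of_set {..<n}) (Pi_pmf P d (\<lambda>_. pmf_of_set T)))
      = pair_pmf (pmf_of_set {..<n}) (pmf_of_set T)"
    using map_pair[of id "\<lambda>\<tau>. \<tau> q" "pmf_of_set {..<n}" "Pi_pmf P d (\<lambda>_. pmf_of_set T)"] assms(1,2)
    by (simp add: Pi_pmf_component case_prod_unfold id_def)
  have preimage: "{(I, \<tau>). fst (\<tau> q) = I} = (\<lambda>(I, \<tau>). (I, \<tau> q)) -` {(I, e). fst e = I}"
    by auto
  have "measure_pmf.prob (pair_pmf (pmf_of_set {..<n}) (Pi_pmf P d (\<lambda>_. pmf_of_set T))) {(I, \<tau>). fst (\<tau> q) = I}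
      = measure_pmf.prob (pair_pmf (pmf_of_set {..<n}) (pmf_of_set T)) {(I, e). fst e = I}"
    unfolding preimage measure_map_pmf[symmetric] map_eq ..
  also have "\<dots> = real (card (({..<n} \<times> T) \<inter> {(I, e). fst e = I})) / (real n * real (card T))"
    using assms(3,4) by (subst measure_pair_pmf_of_set) (auto simp: T_def finite_Tails)
  also have "({..<n} \<times> T) \<inter> {(I, e). fst e = I} = (\<lambda>e. (fst e, e)) ` T"
    by (auto simp: T_def Tails_def image_iff)
  also have "real (card \<dots>) / (real n * real (card T)) = 1 / real n"
    using assms(4) by (simp add: card_image inj_on_def T_def finite_Tails)
  also have "\<dots> \<le> real D / real (card T)"
  proof -
    have "card T > 0"
      using assms(4) by (simp add: T_def finite_Tails card_gt_0_iff)
    moreover have "real (card T) \<le> real D * real n"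
      using of_nat_mono[OF assms(5)] by (simp add: T_def mult.commute)
    ultimately show ?thesis
      using assms(3) by (simp add: field_simps)
  qed
  finally show ?thesis
    by (simp add: T_def)
qed

lemma prob_not_collision_free_le:
  assumes "finite P" "n > 0" "Tails n dout \<noteq> {}" "\<And>i. i < n \<Longrightarrow> dout i \<le> D"
  shows "measure_pmf.prob (pair_pmf (pmf_of_set {..<n}) (Pi_pmf P d (\<lambda>_. pmf_of_set (Tails n dout))))
           {(I, \<tau>). \<not> collision_free P I \<tau>} \<le> real (card P) ^ 2 * D / card (Tails n dout)"
    (is "measure_pmf.prob ?\<nu> _ \<le> _")
proof -
  define b where "b = real D / real (card (Tails n dout))"
  define PP where "PP = {(q1, q2) \<in> P \<times> P. q1 \<noteq> q2}"
  define same :: "nat list \<times> nat list \<Rightarrow> (nat \<times> (nat list \<Rightarrow> nat \<times> nat)) set"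
    where "same = (\<lambda>(q1, q2). snd -` {\<tau>. fst (\<tau> q1) = fst (\<tau> q2)})"
  define root :: "nat list \<Rightarrow> (nat \<times> (nat list \<Rightarrow> nat \<times> nat)) set"
    where "root = (\<lambda>q. {(I, \<tau>). fst (\<tau> q) = I})"
  have "card (Tails n dout) \<le> n * D"
    using sum_bounded_above[of "{..<n}" dout D] assms(4) by (simp add: card_Tails)
  then have prob_root: "measure_pmf.prob ?\<nu> (root q) \<le> b" if "q \<in> P" for q
    unfolding root_def b_def using prob_root_vertex_le[OF assms(1) that assms(2,3)] by simp
  have prob_same: "measure_pmf.prob ?\<nu> (same pq) \<le> b" if "pq \<in> PP" for pq
  proof -
    obtain q1 q2 where pq: "pq = (q1, q2)" "q1 \<in> P" "q2 \<in> P" "q1 \<noteq> q2"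
      using \<open>pq \<in> PP\<close> by (auto simp: PP_def)
    have "measure_pmf.prob ?\<nu> (same pq) = measure_pmf.prob (map_pmf snd ?\<nu>) {\<tau>. fst (\<tau> q1) = fst (\<tau> q2)}"
      by (simp add: same_def pq(1))
    then show ?thesis
      unfolding b_def map_snd_pair_pmf using prob_same_vertex_le[OF assms(1) pq(2-4) assms(3,4)] by simp
  qed
  have card_PP: "card PP + card P = card P ^ 2"
    unfolding PP_def by (rule card_off_diagonal[OF assms(1)])
  have "{(I, \<tau>). \<not> collision_free P I \<tau>} \<subseteq> (\<Union>pq\<in>PP. same pq) \<union> (\<Union>q\<in>P. root q)"
    by (auto simp: collision_free_def PP_def same_def root_def)
  then have "measure_pmf.prob ?\<nu> {(I, \<tau>). \<not> collision_free P I \<tau>}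
      \<le> measure_pmf.prob ?\<nu> ((\<Union>pq\<in>PP. same pq) \<union> (\<Union>q\<in>P. root q))"
    by (rule measure_pmf.finite_measure_mono) simp
  also have "\<dots> \<le> measure_pmf.prob ?\<nu> (\<Union>pq\<in>PP. same pq) + measure_pmf.prob ?\<nu> (\<Union>q\<in>P. root q)"
    by (rule measure_subadditive) auto
  also have "\<dots> \<le> (\<Sum>pq\<in>PP. measure_pmf.prob ?\<nu> (same pq)) + (\<Sum>q\<in>P. measure_pmf.prob ?\<nu> (root q))"
    using assms(1) by (intro add_mono measure_pmf.finite_measure_subadditive_finite)
      (auto simp: PP_def intro: finite_subset[of _ "P \<times> P"])
  also have "\<dots> \<le> (\<Sum>pq\<in>PP. b) + (\<Sum>q\<in>P. b)"
    by (intro add_mono sum_mono prob_same prob_root)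
  also have "\<dots> = real (card P) ^ 2 * b"
    by (simp flip: card_PP distrib_right of_nat_power)
  finally show ?thesis
    by (simp add: b_def)
qed

lemma tv_dist_env_law_M_law_le:
  assumes "n > 0" and "card (Tails n dout) = card (Heads n din)" and "Tails n dout \<noteq> {}"
    and "\<And>i. i < n \<Longrightarrow> din i \<le> D \<and> dout i \<le> D"
  shows "tv_dist (env_law n din dout h) (M_law n din dout h)
           \<le> real (card (positions D h)) ^ 2 * D / card (Tails n dout)"
proof -
  define P where "P = positions D h"
  define \<nu> where "\<nu> = pair_pmf (pmf_of_set {..<n}) (Pi_pmf P (0, 0) (\<lambda>_. pmf_of_set (Tails n dout)))"
  define \<Phi> where "\<Phi> = (\<lambda>(I, \<omega>, \<tau>). (I, coupled_labels P din I (inv_into (Tails n dout) \<omega>) \<tau>))"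
  define V where "V = pair_pmf (pmf_of_set {..<n}) (pair_pmf (config_pmf n din dout)
                        (Pi_pmf P (0, 0) (\<lambda>_. pmf_of_set (Tails n dout))))"
  have "tv_dist (env_law n din dout h) (M_law n din dout h)
      = tv_dist (map_pmf (\<lambda>(I, \<tau>). observation n din dout h I \<tau>) (map_pmf \<Phi> V))
                (map_pmf (\<lambda>(I, \<tau>). observation n din dout h I \<tau>) \<nu>)"
    using env_law_eq_observation[OF assms(1,2), of D h "(0, 0)"]
      M_law_eq_observation[OF assms(1,3), of din D h "(0, 0)"] assms(4)
    by (simp add: \<nu>_def V_def \<Phi>_def P_def pmf.map_comp o_def case_prod_unfold)
  also have "\<dots> \<le> measure_pmf.prob \<nu> (- {(I, \<tau>). collision_free P I \<tau>})"
  proof (rule tv_dist_map_pmf_le)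
    have set_\<nu>: "set_pmf \<nu> = {..<n} \<times> PiE_dflt P (0, 0) (\<lambda>_. Tails n dout)"
      using assms(1,3) by (simp add: \<nu>_def set_Pi_pmf P_def finite_positions finite_Tails o_def lessThan_empty_iff)
    then show "finite (set_pmf \<nu>)"
      by (simp add: P_def finite_positions finite_Tails finite_PiE_dflt)
    show "\<forall>b\<in>{(I, \<tau>). collision_free P I \<tau>}. pmf \<nu> b \<le> pmf (map_pmf \<Phi> V) b"
    proof clarify
      fix I \<tau> assume "collision_free P I \<tau>"
      show "pmf \<nu> (I, \<tau>) \<le> pmf (map_pmf \<Phi> V) (I, \<tau>)"
      proof (cases "(I, \<tau>) \<in> set_pmf \<nu>")
        case True
        then have "I < n" "\<And>q. q \<in> P \<Longrightarrow> \<tau> q \<in> Tails n dout" "\<And>q. q \<notin> P \<Longrightarrow> \<tau> q = (0, 0)"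
          using set_\<nu> by (auto simp: PiE_dflt_def)
        then show ?thesis
          using pmf_le_pmf_coupled[of n dout din I D h \<tau> "(0, 0)"] \<open>collision_free P I \<tau>\<close> assms(2,3)
          by (simp add: \<nu>_def V_def \<Phi>_def P_def)
      qed (simp add: set_pmf_iff)
    qed
  qed
  also have "\<dots> \<le> real (card P) ^ 2 * D / card (Tails n dout)"
    using prob_not_collision_free_le[OF _ assms(1,3), of P D "(0, 0)"] assms(4)
    by (simp add: \<nu>_def P_def finite_positions Compl_eq case_prod_unfold)
  finally show ?thesis
    by (simp add: P_def)
qed

lemma card_positions_squared_less:
  assumes "D \<ge> 2"
  shows "real (card (positions D h)) ^ 2 * D < real D ^ (2 * h + 3)"
proof -
  have "card (positions D h) ^ 2 * D < (D ^ Suc h) ^ 2 * D"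
    using card_positions_less[OF assms] assms by (simp add: power_strict_mono)
  also have "\<dots> = D ^ Suc (Suc h * 2)"
    by (simp only: power_mult power_Suc2)
  also have "Suc (Suc h * 2) = 2 * h + 3"
    by simp
  finally show ?thesis
    by (simp flip: of_nat_power of_nat_mult of_nat_less_iff)
qed

theorem proposition6:
  fixes n :: nat and din dout :: "nat \<Rightarrow> nat" and m \<Delta> h :: nat
  assumes "n > 0"
    and "\<And>i. i < n \<Longrightarrow> din i \<ge> 2 \<and> dout i \<ge> 2"
    and "m = (\<Sum>i<n. din i)" and "m = (\<Sum>i<n. dout i)"
    and "\<Delta> = Max ((\<lambda>i. max (din i) (dout i)) ` {..<n})"
    and "h = nat \<lfloor>ln (real n) / (10 * ln (real \<Delta>))\<rfloor>"
  shows "tv_dist (env_law n din dout h) (M_law n din dout h) < real \<Delta> ^ (2*h+3) / real m"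
proof -
  have degrees: "din i \<le> \<Delta> \<and> dout i \<le> \<Delta>" if "i < n" for i
    using that Max_ge[of "(\<lambda>i. max (din i) (dout i)) ` {..<n}" "max (din i) (dout i)"] assms(5) by auto
  then have "\<Delta> \<ge> 2"
    using assms(1,2) by (meson order_trans)
  have m: "card (Tails n dout) = m" "card (Heads n din) = m"
    by (simp add: card_Tails assms(4), simp add: card_Heads assms(3))
  moreover have "m \<ge> 2 * n"
    using sum_mono[of "{..<n}" "\<lambda>_. 2" dout] assms(2,4) by simp
  ultimately have "m > 0" "Tails n dout \<noteq> {}"
    using assms(1) by auto
  have "tv_dist (env_law n din dout h) (M_law n din dout h)
          \<le> real (card (positions \<Delta> h)) ^ 2 * \<Delta> / card (Tails n dout)"
    by (rule tv_dist_env_law_M_law_le[OF assms(1)]) (use m degrees \<open>Tails n dout \<noteq> {}\<close> in auto)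
  also have "\<dots> < real \<Delta> ^ (2 * h + 3) / m"
    using card_positions_squared_less[OF \<open>\<Delta> \<ge> 2\<close>] \<open>m > 0\<close> m by (simp add: divide_strict_right_mono)
  finally show ?thesis .
qed

end
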